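(* Let $\mathcal C$ be a clique of $\Gamma$ with $|\mathcal C|\ge 4$ which contains a linear $3$-clique (three elliptic ovoids belonging to a common rosette). Then $\mathcal C$ is a linear clique. In particular, a linear clique and a non-linear clique of $\Gamma$ share at most two vertices.
   Context: Let $q=2^n$ and let $Q_0\cong Q(4,q)$ be the parabolic quadric generalized quadrangle in $\mathrm{PG}(4,q)$. An elliptic ovoid of $Q_0$ is a set $X=S\cap Q_0$ where $S$ is a $3$-dimensional projective subspace meeting $Q_0$ in an elliptic quadric $Q^-(3,q)$. Two distinct elliptic ovoids meet in one point (then they are tangent) or in a conic. A rosette based at $p\in Q_0$ is a set of $q$ elliptic ovoids pairwise meeting exactly in $\{p\}$. $\Gamma$ is the graph whose vertices are the elliptic ovoids of $Q_0$, adjacent iff distinct and tangent. A clique of $\Gamma$ is linear if it is contained in some rosette (i.e. all its members pairwise meet in the same point), and non-linear otherwise. *)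

theory Defs
  imports "HOL-Analysis.Analysis"
begin

text \<open>Vectors of the underlying vector space V(5,q) of PG(4,q) are elements of 'a^5,
  where 'a is a finite field.  Projective points are 1-dimensional subspaces.\<close>

definition Qform :: "'a::field ^ 5 \<Rightarrow> 'a" where
  "Qform x = (x $ 0)^2 + (x $ 1) * (x $ 2) + (x $ 3) * (x $ 4)"

definition proj_point :: "('a::field ^ 5) set \<Rightarrow> bool" where
  "proj_point U \<longleftrightarrow> vec.subspace U \<and> vec.dim U = 1"

definition Q0 :: "('a::field ^ 5) set set" where
  "Q0 = {U. proj_point U \<and> (\<forall>v\<in>U. Qform v = 0)}"

text \<open>A solid (3-dimensional projective subspace) S meeting Q_0 in an elliptic quadric
  Q^-(3,q): in suitable coordinates of S the quadratic form restricted to S is (a nonzero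
  multiple of) the elliptic form y1 y2 + y3^2 + y3 y4 + d y4^2 with t^2+t+d irreducible.\<close>
definition elliptic_solid :: "('a::field ^ 5) set \<Rightarrow> bool" where
  "elliptic_solid S \<longleftrightarrow> vec.subspace S \<and> vec.dim S = 4 \<and>
     (\<exists>b1 b2 b3 b4 (c::'a) d. S = vec.span {b1, b2, b3, b4} \<and> c \<noteq> 0 \<and>
        (\<forall>t. t^2 + t + d \<noteq> 0) \<and>
        (\<forall>y1 y2 y3 y4. Qform (y1 *s b1 + y2 *s b2 + y3 *s b3 + y4 *s b4)
            = c * (y1 * y2 + y3^2 + y3 * y4 + d * y4^2)))"

definition elliptic_ovoid :: "('a::field ^ 5) set set \<Rightarrow> bool" where
  "elliptic_ovoid X \<longleftrightarrow> (\<exists>S. elliptic_solid S \<and> X = {p \<in> Q0. p \<subseteq> S})"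

definition adjacent :: "('a::field ^ 5) set set \<Rightarrow> ('a ^ 5) set set \<Rightarrow> bool" where
  "adjacent X Y \<longleftrightarrow> elliptic_ovoid X \<and> elliptic_ovoid Y \<and> X \<noteq> Y \<and> card (X \<inter> Y) = 1"

definition clique :: "('a::field ^ 5) set set set \<Rightarrow> bool" where
  "clique C \<longleftrightarrow> (\<forall>X\<in>C. elliptic_ovoid X) \<and> (\<forall>X\<in>C. \<forall>Y\<in>C. X \<noteq> Y \<longrightarrow> adjacent X Y)"

definition rosette :: "('a::field ^ 5) set \<Rightarrow> ('a ^ 5) set set set \<Rightarrow> bool" where
  "rosette p R \<longleftrightarrow> p \<in> Q0 \<and> (\<forall>X\<in>R. elliptic_ovoid X) \<and> card R = CARD('a) \<and>
     (\<forall>X\<in>R. \<forall>Y\<in>R. X \<noteq> Y \<longrightarrow> X \<inter> Y = {p})"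

definition linear_clique :: "('a::field ^ 5) set set set \<Rightarrow> bool" where
  "linear_clique C \<longleftrightarrow> clique C \<and> (\<exists>p R. rosette p R \<and> C \<subseteq> R)"

end

theory Submission
  imports Defs "HOL-Number_Theory.Residues"
begin

text \<open>Let three ovoids of the rosette \<open>R\<close> meet pairwise in \<open>p = \<langle>v\<rangle>\<close>. The solids of any two
  tangent elliptic ovoids meet in the polar plane of the common point, so all solids of \<open>R\<close>
  contain the plane \<open>P = v\<^sup>\<perp> \<inter> S\<^sub>1\<close>. An elliptic ovoid tangent to three ovoids of \<open>R\<close> must pass
  through \<open>p\<close>, so its solid contains \<open>P\<close> as well. But only \<open>q\<close> solids through \<open>P\<close> are
  elliptic (the remaining one contains the nucleus), and \<open>R\<close> already accounts for \<open>q\<close> of them;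
  hence the whole clique lies in \<open>R\<close>. Three common vertices of a linear and a non-linear
  clique would form a linear triangle in the latter, making it linear.\<close>

lemma two_eq_zero_if_CARD_power_of_two:
  assumes "finite (UNIV :: 'a::field set)" and "CARD('a) = 2 ^ n"
  shows "(2::'a) = 0"
proof -
  have pos: "CHAR('a) > 0" using assms(1) by (simp add: finite_imp_CHAR_pos)
  have prime: "prime CHAR('a)" using prime_CHAR_semidom[OF pos] .
  have "CHAR('a) dvd 2 ^ n" using CHAR_dvd_CARD assms(2) by metis
  then have "CHAR('a) dvd 2" using prime prime_dvd_power by blast
  then have "CHAR('a) = 2" using prime by (metis primes_dvd_imp_eq two_is_prime_nat)
  then show ?thesis using of_nat_CHAR[where 'a='a] by simp
qed

definition subspace_sum :: "('a::field ^ 'n) set \<Rightarrow> ('a ^ 'n) set \<Rightarrow> ('a ^ 'n) set" where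
  "subspace_sum A B = {x + y |x y. x \<in> A \<and> y \<in> B}"

lemma subspace_subspace_sum:
  "vec.subspace A \<Longrightarrow> vec.subspace B \<Longrightarrow> vec.subspace (subspace_sum A B)"
  unfolding subspace_sum_def by (rule vec.subspace_sums)

lemma dim_subspace_sum_Int:
  "vec.subspace A \<Longrightarrow> vec.subspace B \<Longrightarrow>
    vec.dim (subspace_sum A B) + vec.dim (A \<inter> B) = vec.dim A + vec.dim B"
  unfolding subspace_sum_def by (rule vec.dim_sums_Int)

lemma subspace_sum_upper1: "vec.subspace B \<Longrightarrow> A \<subseteq> subspace_sum A B"
  unfolding subspace_sum_def by (force dest: vec.subspace_0)

lemma subspace_sum_upper2: "vec.subspace A \<Longrightarrow> B \<subseteq> subspace_sum A B"
  unfolding subspace_sum_def by (force dest: vec.subspace_0)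

lemma subspace_sum_least:
  "vec.subspace C \<Longrightarrow> A \<subseteq> C \<Longrightarrow> B \<subseteq> C \<Longrightarrow> subspace_sum A B \<subseteq> C"
  unfolding subspace_sum_def by (auto intro: vec.subspace_add)

lemma dim_le_CARD: "vec.dim (S :: ('a::field ^ 'n) set) \<le> CARD('n)"
  using vec.dim_subset_UNIV[of S] by (simp add: vec.dimension_def card_cart_basis)

lemma dim_strict_mono:
  "vec.subspace A \<Longrightarrow> vec.subspace B \<Longrightarrow> A \<subset> B \<Longrightarrow> vec.dim A < vec.dim B"
  by (metis vec.dim_psubset vec.span_eq_iff)

lemma dim_Int_hyperplanes:
  fixes S1 S2 :: "('a::field ^ 'n) set"
  assumes "vec.subspace S1" "vec.subspace S2" "vec.dim S1 + 1 = CARD('n)"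
    "vec.dim S2 + 1 = CARD('n)" "S1 \<noteq> S2"
  shows "vec.dim (S1 \<inter> S2) + 2 = CARD('n)"
proof -
  let ?P = "subspace_sum S1 S2"
  have P: "vec.subspace ?P" using assms subspace_subspace_sum by blast
  have S1P: "S1 \<subseteq> ?P" and S2P: "S2 \<subseteq> ?P"
    using subspace_sum_upper1 subspace_sum_upper2 assms by blast+
  have "vec.dim ?P \<noteq> vec.dim S1"
  proof
    assume "vec.dim ?P = vec.dim S1"
    then have "S1 = ?P" "S2 = ?P"
      using vec.subspace_dim_equal[of S1 ?P] vec.subspace_dim_equal[of S2 ?P] assms P S1P S2P
      by auto
    then show False using assms by simp
  qed
  moreover have "vec.dim S1 \<le> vec.dim ?P" using vec.dim_subset[OF S1P] .
  ultimately have "vec.dim ?P = CARD('n)" using dim_le_CARD[of ?P] assms by linarith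
  then show ?thesis using dim_subspace_sum_Int[OF assms(1,2)] assms by simp
qed

lemma dim_subspace_sum_span_singleton:
  fixes P :: "('a::field ^ 'n) set"
  assumes "vec.subspace P" "v \<notin> P"
  shows "vec.dim (subspace_sum P (vec.span {v})) = vec.dim P + 1"
proof -
  have "v \<noteq> 0" using assms vec.subspace_0 by blast
  have "P \<inter> vec.span {v} \<subseteq> {0}"
  proof
    fix x assume x: "x \<in> P \<inter> vec.span {v}"
    then obtain k where k: "x = k *s v" by (auto simp: vec.span_singleton)
    show "x \<in> {0}"
    proof (cases "k = 0")
      case False
      then have "v = inverse k *s x" using k by simp
      then have "v \<in> P" using x assms(1) vec.subspace_scale by auto
      then show ?thesis using assms by simp
    qed (simp add: k)
  qed
  then have "vec.dim (P \<inter> vec.span {v}) = 0" using vec.dim_eq_0 by blast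
  moreover have "vec.dim (vec.span {v}) = 1" using \<open>v \<noteq> 0\<close> by simp
  ultimately show ?thesis
    using dim_subspace_sum_Int[OF assms(1) vec.subspace_span[of "{v}"]] by linarith
qed

lemma span_pair_eq: "vec.span {a, b :: 'a::field ^ 'n} = {s *s a + r *s b |s r. True}"
  by (auto simp: vec.span_insert vec.span_singleton diff_eq_eq) (metis add.commute)+

lemma in_span_four_iff:
  "x \<in> vec.span {b1, b2, b3, b4 :: 'a::field ^ 'n} \<longleftrightarrow>
    (\<exists>y1 y2 y3 y4. x = y1 *s b1 + y2 *s b2 + y3 *s b3 + y4 *s b4)"
proof -
  have "x \<in> vec.span {b1, b2, b3, b4} \<longleftrightarrow>
      (\<exists>k ka kb kc. x - (k *s b1 + (ka *s b2 + kb *s b3)) = kc *s b4)"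
    by (simp add: vec.span_insert vec.span_singleton diff_diff_eq)
  also have "\<dots> \<longleftrightarrow> (\<exists>y1 y2 y3 y4. x = y1 *s b1 + y2 *s b2 + y3 *s b3 + y4 *s b4)"
    by (simp add: diff_eq_eq add_ac)
  finally show ?thesis .
qed

lemma dim_span_pair:
  fixes a b :: "'a::field ^ 'n"
  assumes "b \<noteq> 0" "a \<notin> vec.span {b}"
  shows "vec.dim (vec.span {a, b}) = 2"
proof -
  have "a \<noteq> b" using assms(2) vec.span_base by blast
  moreover have "vec.independent {a, b}"
    using assms by (simp add: vec.independent_insert)
  ultimately show ?thesis using vec.dim_span_eq_card_independent by fastforce
qed

lemma hyperplane_meets_affine_line:
  fixes a b :: "'a::field ^ 'n"
  assumes H: "vec.subspace H" "vec.dim H + 1 = CARD('n)" "a \<notin> H"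
    and ab: "b \<noteq> 0" "a \<notin> vec.span {b}"
  obtains t where "t *s a + b \<in> H"
proof -
  have "vec.dim (H \<inter> vec.span {a, b}) \<noteq> 0"
    using dim_subspace_sum_Int[OF H(1) vec.subspace_span, of "{a, b}"]
      dim_le_CARD[of "subspace_sum H (vec.span {a, b})"] dim_span_pair[OF ab] H(2) by linarith
  then have "\<not> H \<inter> vec.span {a, b} \<subseteq> {0}" by (simp add: vec.dim_eq_0)
  then obtain h where h: "h \<in> H" "h \<in> vec.span {a, b}" "h \<noteq> 0" by blast
  then obtain s r where sr: "h = s *s a + r *s b" unfolding span_pair_eq by auto
  have "r \<noteq> 0"
  proof
    assume "r = 0"
    then have "s \<noteq> 0" "h = s *s a" using sr h(3) by auto
    then have "a = inverse s *s h" by simp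
    then have "a \<in> H" using vec.subspace_scale[OF H(1) h(1)] by simp
    then show False using H(3) by simp
  qed
  then have "(s / r) *s a + b = inverse r *s h"
    unfolding sr by (simp add: vec.scale_right_distrib divide_inverse mult.commute)
  then have "(s / r) *s a + b \<in> H" using vec.subspace_scale[OF H(1) h(1)] by simp
  then show ?thesis by (rule that)
qed

lemma hyperplanes_through_avoiding_in_range:
  fixes P :: "('a::field ^ 'n) set"
  assumes P: "vec.subspace P" "vec.dim P + 2 = CARD('n)" and a: "a \<notin> P"
  obtains f :: "'a \<Rightarrow> ('a ^ 'n) set" where
    "\<And>H. vec.subspace H \<Longrightarrow> vec.dim H + 1 = CARD('n) \<Longrightarrow> P \<subseteq> H \<Longrightarrow> a \<notin> H \<Longrightarrow>
      H \<in> range f"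
proof -
  define H0 where "H0 = subspace_sum P (vec.span {a})"
  have H0: "vec.subspace H0" "vec.dim H0 + 1 = CARD('n)"
    unfolding H0_def using subspace_subspace_sum[OF P(1)] dim_subspace_sum_span_singleton[OF P(1) a] P(2)
    by auto
  have "H0 \<noteq> UNIV"
  proof
    assume "H0 = UNIV"
    then have "vec.dim H0 = CARD('n)" by (simp add: vec.dim_UNIV card_cart_basis)
    then show False using H0(2) by simp
  qed
  then obtain b where b: "b \<notin> H0" by blast
  have "a \<in> H0" unfolding H0_def using subspace_sum_upper2[OF P(1)] vec.span_base by blast
  have "b \<noteq> 0" using b vec.subspace_0[OF H0(1)] by blast
  have "a \<notin> vec.span {b}"
  proof
    assume "a \<in> vec.span {b}"
    then obtain k where k: "a = k *s b" by (auto simp: vec.span_singleton)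
    then have "k \<noteq> 0" using a vec.subspace_0[OF P(1)] by auto
    then have "b = inverse k *s a" using k by simp
    then show False using b vec.subspace_scale[OF H0(1) \<open>a \<in> H0\<close>] by simp
  qed
  define f where "f t = subspace_sum P (vec.span {t *s a + b})" for t
  have "H \<in> range f"
    if H: "vec.subspace H" "vec.dim H + 1 = CARD('n)" "P \<subseteq> H" "a \<notin> H" for H
  proof -
    obtain t where t: "t *s a + b \<in> H"
      using hyperplane_meets_affine_line[OF H(1,2,4) \<open>b \<noteq> 0\<close> \<open>a \<notin> vec.span {b}\<close>] .
    have "t *s a + b \<notin> P"
    proof
      assume "t *s a + b \<in> P"
      moreover have "b = (t *s a + b) + (- t) *s a" by simp
      moreover have "(- t) *s a \<in> vec.span {a}" unfolding vec.span_singleton by (rule rangeI)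
      ultimately have "b \<in> H0" unfolding H0_def subspace_sum_def by blast
      then show False using b by simp
    qed
    then have "vec.dim (f t) = vec.dim H"
      unfolding f_def using dim_subspace_sum_span_singleton[OF P(1)] P(2) H(2) by simp
    moreover have "f t \<subseteq> H"
      unfolding f_def using subspace_sum_least[OF H(1) H(3)] t H(1) by (simp add: vec.span_minimal)
    ultimately have "f t = H"
      using vec.subspace_dim_equal[OF _ H(1)] subspace_subspace_sum[OF P(1) vec.subspace_span]
      unfolding f_def by simp
    then show ?thesis by (metis rangeI)
  qed
  then show ?thesis using that by blast
qed

subsection \<open>The quadratic form and its polar form\<close>

text \<open>In characteristic 2 the square term of \<open>Qform\<close> is additive, so it does not
  contribute to the polar form.\<close>
definition polar :: "'a::field ^ 5 \<Rightarrow> 'a ^ 5 \<Rightarrow> 'a" where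
  "polar x y = x$1 * y$2 + x$2 * y$1 + x$3 * y$4 + x$4 * y$3"

lemma polar_commute: "polar x y = polar y x"
  unfolding polar_def by (simp add: algebra_simps)

lemma polar_add_left: "polar (x + y) z = polar x z + polar y z"
  and polar_add_right: "polar z (x + y) = polar z x + polar z y"
  and polar_diff_right: "polar z (x - y) = polar z x - polar z y"
  and polar_minus_right: "polar z (- x) = - polar z x"
  and polar_scale_left: "polar (k *s x) z = k * polar x z"
  and polar_scale_right: "polar z (k *s x) = k * polar z x"
  and polar_zero_right: "polar z 0 = 0"
  unfolding polar_def by (simp_all add: algebra_simps)

lemma Qform_scale: "Qform (k *s x) = k^2 * Qform x"
  unfolding Qform_def by (simp add: power2_eq_square algebra_simps)

locale char_2 =
  fixes field_type :: "'a::field itself"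
  assumes two_eq_zero: "(2::'a) = 0"
begin

lemma add_self_eq_zero: "(x::'a) + x = 0"
  using two_eq_zero by (metis mult_2 mult_zero_left)

lemma minus_eq_self: "- (x::'a) = x"
  by (metis add_self_eq_zero add.inverse_unique)

lemma Qform_add: "Qform (x + y :: 'a ^ 5) = Qform x + Qform y + polar x y"
proof -
  have "Qform (x + y) = Qform x + Qform y + polar x y + 2 * (x$0 * y$0)"
    unfolding Qform_def polar_def by (simp add: power2_eq_square algebra_simps)
  then show ?thesis unfolding two_eq_zero by simp
qed

lemma polar_self: "polar x (x :: 'a ^ 5) = 0"
proof -
  have "polar x x = (x$1 * x$2 + x$1 * x$2) + (x$3 * x$4 + x$3 * x$4)"
    unfolding polar_def by (simp add: ac_simps)
  then show ?thesis by (simp only: add_self_eq_zero add_0_right)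
qed

end

definition proj_pt :: "'a::field ^ 'n \<Rightarrow> ('a ^ 'n) set" where
  "proj_pt v = vec.span {v}"

lemma proj_pt_eq_range: "proj_pt v = range (\<lambda>k. k *s v)"
  unfolding proj_pt_def by (rule vec.span_singleton)

lemma proj_point_proj_pt: "v \<noteq> 0 \<Longrightarrow> proj_point (proj_pt v)"
  unfolding proj_point_def proj_pt_def by (simp add: vec.subspace_span)

lemma proj_pointE:
  assumes "proj_point U"
  obtains v where "v \<noteq> 0" "U = proj_pt v"
proof -
  from assms have U: "vec.subspace U" "vec.dim U = 1" by (auto simp: proj_point_def)
  obtain B where B: "B \<subseteq> U" "vec.independent B" "U \<subseteq> vec.span B" "card B = vec.dim U"
    using vec.basis_exists by blast
  with U(2) obtain v where v: "B = {v}" by (metis card_1_singletonE)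
  have "v \<noteq> 0" using B(2) v vec.dependent_zero by blast
  moreover have "U = proj_pt v"
    using B v U(1) unfolding proj_pt_def by (metis vec.span_minimal subset_antisym)
  ultimately show ?thesis by (rule that)
qed

lemma proj_pt_subset_iff: "vec.subspace S \<Longrightarrow> proj_pt v \<subseteq> S \<longleftrightarrow> v \<in> S"
  unfolding proj_pt_def by (metis insert_subset vec.span_base vec.span_minimal vec.span_superset
      empty_subsetI singletonI subset_trans)

lemma proj_pt_eq_iff:
  assumes "v \<noteq> 0" "w \<noteq> 0"
  shows "proj_pt v = proj_pt w \<longleftrightarrow> (\<exists>k. w = k *s v)"
proof
  assume "proj_pt v = proj_pt w"
  then have "w \<in> proj_pt v" unfolding proj_pt_def by (metis vec.span_base singletonI)
  then show "\<exists>k. w = k *s v" unfolding proj_pt_eq_range by auto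
next
  assume "\<exists>k. w = k *s v"
  then obtain k where k: "w = k *s v" by blast
  with assms have "k \<noteq> 0" by auto
  have "proj_pt w \<subseteq> proj_pt v" unfolding proj_pt_eq_range k by (auto simp: vector_smult_assoc)
  moreover have "proj_pt v \<subseteq> proj_pt w"
  proof
    fix u assume "u \<in> proj_pt v"
    then obtain j where "u = j *s v" unfolding proj_pt_eq_range by auto
    then have "u = (j / k) *s w" using \<open>k \<noteq> 0\<close> k by (simp add: vector_smult_assoc)
    then show "u \<in> proj_pt w" unfolding proj_pt_eq_range by auto
  qed
  ultimately show "proj_pt v = proj_pt w" by blast
qed

lemma proj_pt_in_Q0_iff: "proj_pt v \<in> Q0 \<longleftrightarrow> v \<noteq> 0 \<and> Qform v = 0"
proof
  assume "proj_pt v \<in> Q0"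
  then have "proj_point (proj_pt v)" "\<forall>u\<in>proj_pt v. Qform u = 0" by (auto simp: Q0_def)
  then show "v \<noteq> 0 \<and> Qform v = 0"
    unfolding proj_point_def proj_pt_def by (auto simp: vec.span_base)
next
  assume "v \<noteq> 0 \<and> Qform v = 0"
  then show "proj_pt v \<in> Q0"
    unfolding Q0_def using proj_point_proj_pt by (auto simp: proj_pt_eq_range Qform_scale)
qed

lemma Q0E:
  assumes "U \<in> Q0"
  obtains v where "v \<noteq> 0" "Qform v = 0" "U = proj_pt v"
proof -
  from assms obtain v where "v \<noteq> 0" "U = proj_pt v"
    unfolding Q0_def using proj_pointE by blast
  with assms show ?thesis using that proj_pt_in_Q0_iff by blast
qed

subsection \<open>Elliptic solids\<close>

lemma anisotropic_form_eq_zero: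
  fixes a b d :: "'a::field"
  assumes "\<forall>t. t^2 + t + d \<noteq> 0" "a^2 + a*b + d*b^2 = 0"
  shows "a = 0 \<and> b = 0"
proof (cases "b = 0")
  case True
  then show ?thesis using assms(2) by simp
next
  case False
  have "(a/b)^2 + a/b + d = (a^2 + a*b + d*b^2) / b^2"
    using False by (simp add: field_simps power2_eq_square)
  then show ?thesis using assms False by simp
qed

lemma elliptic_solid_subspace: "elliptic_solid S \<Longrightarrow> vec.subspace S"
  and elliptic_solid_dim: "elliptic_solid S \<Longrightarrow> vec.dim S = 4"
  unfolding elliptic_solid_def by simp_all

context char_2
begin

text \<open>The first two identities say that \<open>Z1 y - Y1 z\<close>, a singular vector with vanishing
  first coordinate, has vanishing anisotropic part.\<close>
lemma elliptic_form_cross_products: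
  fixes Y1 Y2 Y3 Y4 Z1 Z2 Z3 Z4 d :: 'a
  assumes an: "\<forall>t. t^2 + t + d \<noteq> 0"
    and Y: "Y1*Y2 + Y3^2 + Y3*Y4 + d*Y4^2 = 0" and Z: "Z1*Z2 + Z3^2 + Z3*Z4 + d*Z4^2 = 0"
    and YZ: "Y1*Z2 + Y2*Z1 + Y3*Z4 + Y4*Z3 = 0"
  shows "Z1*Y3 = Y1*Z3" "Z1*Y4 = Y1*Z4" "Y1 * (Y1*Z2 + Y2*Z1) = 0"
proof -
  have "(Z1*Y3 - Y1*Z3)^2 + (Z1*Y3 - Y1*Z3) * (Z1*Y4 - Y1*Z4) + d * (Z1*Y4 - Y1*Z4)^2
      = Z1^2 * (Y1*Y2 + Y3^2 + Y3*Y4 + d*Y4^2) + Y1^2 * (Z1*Z2 + Z3^2 + Z3*Z4 + d*Z4^2)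
        - Z1*Y1 * (Y1*Z2 + Y2*Z1 + Y3*Z4 + Y4*Z3) - 2 * (Z1*Y3*Y1*Z3 + d*Z1*Y4*Y1*Z4)"
    by (simp add: algebra_simps power2_eq_square)
  also have "\<dots> = 0" unfolding Y Z YZ two_eq_zero by simp
  finally have "Z1*Y3 - Y1*Z3 = 0 \<and> Z1*Y4 - Y1*Z4 = 0"
    by (rule anisotropic_form_eq_zero[OF an])
  then show Y3: "Z1*Y3 = Y1*Z3" and Y4: "Z1*Y4 = Y1*Z4" by simp_all
  have "Y1 * (Y1*Z2 + Y2*Z1)
      = Y1 * (Y1*Z2 + Y2*Z1 + Y3*Z4 + Y4*Z3) - (Y3 * (Y1*Z4) + Y4 * (Y1*Z3))"
    by (simp add: algebra_simps)
  also have "\<dots> = - (2 * (Z1*Y3*Y4))" unfolding YZ Y3[symmetric] Y4[symmetric]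
    by (simp add: algebra_simps)
  finally show "Y1 * (Y1*Z2 + Y2*Z1) = 0" unfolding two_eq_zero by simp
qed

lemma elliptic_form_singular_orthogonal_proportional:
  fixes Y1 Y2 Y3 Y4 Z1 Z2 Z3 Z4 d :: 'a
  assumes an: "\<forall>t. t^2 + t + d \<noteq> 0"
    and Y: "Y1*Y2 + Y3^2 + Y3*Y4 + d*Y4^2 = 0" and Z: "Z1*Z2 + Z3^2 + Z3*Z4 + d*Z4^2 = 0"
    and YZ: "Y1*Z2 + Y2*Z1 + Y3*Z4 + Y4*Z3 = 0"
    and nz: "\<not> (Y1 = 0 \<and> Y2 = 0 \<and> Y3 = 0 \<and> Y4 = 0)"
  obtains k where "Z1 = k*Y1" "Z2 = k*Y2" "Z3 = k*Y3" "Z4 = k*Y4"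
proof -
  note cross1 = elliptic_form_cross_products[OF an Y Z YZ]
  have "Y2*Y1 + Y3^2 + Y3*Y4 + d*Y4^2 = 0" "Z2*Z1 + Z3^2 + Z3*Z4 + d*Z4^2 = 0"
    "Y2*Z1 + Y1*Z2 + Y3*Z4 + Y4*Z3 = 0"
    using Y Z YZ by (simp_all add: ac_simps)
  note cross2 = elliptic_form_cross_products[OF an this]
  have "Y1 \<noteq> 0 \<or> Y2 \<noteq> 0"
  proof (rule ccontr)
    assume "\<not> (Y1 \<noteq> 0 \<or> Y2 \<noteq> 0)"
    then have "Y3^2 + Y3*Y4 + d*Y4^2 = 0" using Y by simp
    then show False using anisotropic_form_eq_zero[OF an] nz \<open>\<not> (Y1 \<noteq> 0 \<or> Y2 \<noteq> 0)\<close> by blast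
  qed
  then have "Y1*Z2 + Y2*Z1 = 0" using cross1(3) cross2(3) by (auto simp: ac_simps)
  then have Y12: "Y1*Z2 = Y2*Z1" by (metis add.inverse_unique minus_eq_self)
  show ?thesis
  proof (cases "Y1 = 0")
    case False
    show ?thesis
      by (rule that[of "Z1/Y1"]) (use False Y12 cross1 in \<open>auto simp: field_simps\<close>)
  next
    case True
    with \<open>Y1 \<noteq> 0 \<or> Y2 \<noteq> 0\<close> have "Y2 \<noteq> 0" by simp
    show ?thesis
      by (rule that[of "Z2/Y2"]) (use \<open>Y2 \<noteq> 0\<close> Y12 cross2 in \<open>auto simp: field_simps\<close>)
  qed
qed

lemma elliptic_solid_coordsE:
  fixes S :: "('a ^ 5) set"
  assumes "elliptic_solid S"
  obtains b1 b2 b3 b4 c d where "S = vec.span {b1, b2, b3, b4}" "(c::'a) \<noteq> 0"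
    "\<forall>t. t^2 + t + d \<noteq> 0"
    "\<And>y1 y2 y3 y4. Qform (y1 *s b1 + y2 *s b2 + y3 *s b3 + y4 *s b4)
        = c * (y1 * y2 + y3^2 + y3 * y4 + d * y4^2)"
    "\<And>y1 y2 y3 y4 z1 z2 z3 z4.
       polar (y1 *s b1 + y2 *s b2 + y3 *s b3 + y4 *s b4) (z1 *s b1 + z2 *s b2 + z3 *s b3 + z4 *s b4)
        = c * (y1*z2 + y2*z1 + y3*z4 + y4*z3)"
proof -
  from assms obtain b1 b2 b3 b4 c d where S: "S = vec.span {b1, b2, b3, b4}"
    and c: "(c::'a) \<noteq> 0" and an: "\<forall>t. t^2 + t + d \<noteq> 0"
    and Q: "\<And>y1 y2 y3 y4. Qform (y1 *s b1 + y2 *s b2 + y3 *s b3 + y4 *s b4)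
              = c * (y1 * y2 + y3^2 + y3 * y4 + d * y4^2)"
    unfolding elliptic_solid_def by blast
  have "polar (y1 *s b1 + y2 *s b2 + y3 *s b3 + y4 *s b4) (z1 *s b1 + z2 *s b2 + z3 *s b3 + z4 *s b4)
      = c * (y1*z2 + y2*z1 + y3*z4 + y4*z3)" for y1 y2 y3 y4 z1 z2 z3 z4
  proof -
    let ?y = "y1 *s b1 + y2 *s b2 + y3 *s b3 + y4 *s b4"
    let ?z = "z1 *s b1 + z2 *s b2 + z3 *s b3 + z4 *s b4"
    have sum: "?y + ?z = (y1+z1) *s b1 + (y2+z2) *s b2 + (y3+z3) *s b3 + (y4+z4) *s b4"
      by (simp add: algebra_simps vec.scale_left_distrib)
    have "polar ?y ?z = Qform (?y + ?z) - Qform ?y - Qform ?z" using Qform_add[of ?y ?z] by simp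
    also have "\<dots> = c * ((y1+z1) * (y2+z2) + (y3+z3)^2 + (y3+z3) * (y4+z4) + d * (y4+z4)^2)
        - c * (y1 * y2 + y3^2 + y3 * y4 + d * y4^2) - c * (z1 * z2 + z3^2 + z3 * z4 + d * z4^2)"
      unfolding sum Q by simp
    also have "\<dots> = c * (y1*z2 + y2*z1 + y3*z4 + y4*z3) + 2 * (c * (y3*z3 + d*y4*z4))"
      by (simp add: algebra_simps power2_eq_square)
    finally show ?thesis unfolding two_eq_zero by simp
  qed
  with S c an Q show ?thesis by (rule that)
qed

lemma elliptic_solid_nondegenerate:
  fixes S :: "('a ^ 5) set"
  assumes "elliptic_solid S" "x \<in> S" "\<forall>z\<in>S. polar x z = 0"
  shows "x = 0"
proof -
  obtain b1 b2 b3 b4 c d where S: "S = vec.span {b1, b2, b3, b4}" and "(c::'a) \<noteq> 0"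
    and polar: "\<And>y1 y2 y3 y4 z1 z2 z3 z4.
       polar (y1 *s b1 + y2 *s b2 + y3 *s b3 + y4 *s b4) (z1 *s b1 + z2 *s b2 + z3 *s b3 + z4 *s b4)
        = c * (y1*z2 + y2*z1 + y3*z4 + y4*z3)"
    using elliptic_solid_coordsE[OF assms(1)] by metis
  obtain y1 y2 y3 y4 where x: "x = y1 *s b1 + y2 *s b2 + y3 *s b3 + y4 *s b4"
    using assms(2) S in_span_four_iff by blast
  have "polar x (z1 *s b1 + z2 *s b2 + z3 *s b3 + z4 *s b4) = 0" for z1 z2 z3 z4
    using assms(3) S in_span_four_iff by blast
  from this[of 1 0 0 0] this[of 0 1 0 0] this[of 0 0 1 0] this[of 0 0 0 1]
  have "y2 = 0" "y1 = 0" "y4 = 0" "y3 = 0"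
    unfolding x polar using \<open>c \<noteq> 0\<close> by simp_all
  then show ?thesis using x by simp
qed

text \<open>The elliptic quadric contains no line.\<close>
lemma elliptic_solid_singular_orthogonal_proportional:
  fixes S :: "('a ^ 5) set"
  assumes "elliptic_solid S" "w \<in> S" "z \<in> S" "Qform w = 0" "Qform z = 0" "polar w z = 0"
    "w \<noteq> 0"
  obtains k where "z = k *s w"
proof -
  obtain b1 b2 b3 b4 c d where S: "S = vec.span {b1, b2, b3, b4}" and "(c::'a) \<noteq> 0"
    and an: "\<forall>t. t^2 + t + d \<noteq> 0"
    and Q: "\<And>y1 y2 y3 y4. Qform (y1 *s b1 + y2 *s b2 + y3 *s b3 + y4 *s b4)
        = c * (y1 * y2 + y3^2 + y3 * y4 + d * y4^2)"
    and polar: "\<And>y1 y2 y3 y4 z1 z2 z3 z4.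
       polar (y1 *s b1 + y2 *s b2 + y3 *s b3 + y4 *s b4) (z1 *s b1 + z2 *s b2 + z3 *s b3 + z4 *s b4)
        = c * (y1*z2 + y2*z1 + y3*z4 + y4*z3)"
    using elliptic_solid_coordsE[OF assms(1)] by metis
  obtain y1 y2 y3 y4 where w: "w = y1 *s b1 + y2 *s b2 + y3 *s b3 + y4 *s b4"
    using assms(2) S in_span_four_iff by blast
  obtain z1 z2 z3 z4 where z: "z = z1 *s b1 + z2 *s b2 + z3 *s b3 + z4 *s b4"
    using assms(3) S in_span_four_iff by blast
  have "y1*y2 + y3^2 + y3*y4 + d*y4^2 = 0" using assms(4) Q w \<open>c \<noteq> 0\<close> by simp
  moreover have "z1*z2 + z3^2 + z3*z4 + d*z4^2 = 0" using assms(5) Q z \<open>c \<noteq> 0\<close> by simp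
  moreover have "y1*z2 + y2*z1 + y3*z4 + y4*z3 = 0" using assms(6) polar w z \<open>c \<noteq> 0\<close> by simp
  moreover have "\<not> (y1 = 0 \<and> y2 = 0 \<and> y3 = 0 \<and> y4 = 0)" using w assms(7) by auto
  ultimately obtain k where "z1 = k*y1" "z2 = k*y2" "z3 = k*y3" "z4 = k*y4"
    using elliptic_form_singular_orthogonal_proportional[OF an] by blast
  then have "z = k *s w" unfolding z w by (simp add: algebra_simps vec.scale_right_distrib)
  then show ?thesis by (rule that)
qed

end

text \<open>The nucleus of \<open>Q(4,q)\<close>: the radical of the polar form.\<close>
definition nucleus :: "'a::field ^ 5" where
  "nucleus = axis 0 1"

lemma polar_nucleus: "polar nucleus y = 0"
  unfolding polar_def nucleus_def by (simp add: axis_def)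

lemma nucleus_nonzero: "nucleus \<noteq> 0"
  unfolding nucleus_def by (simp add: axis_eq_0_iff)

lemma (in char_2) nucleus_not_in_elliptic_solid:
  "elliptic_solid (S :: ('a ^ 5) set) \<Longrightarrow> nucleus \<notin> S"
  using elliptic_solid_nondegenerate polar_nucleus nucleus_nonzero by blast

subsection \<open>Tangent elliptic ovoids\<close>

definition ovoid :: "('a::field ^ 5) set \<Rightarrow> ('a ^ 5) set set" where
  "ovoid S = {p \<in> Q0. p \<subseteq> S}"

lemma elliptic_ovoid_iff: "elliptic_ovoid X \<longleftrightarrow> (\<exists>S. elliptic_solid S \<and> X = ovoid S)"
  unfolding elliptic_ovoid_def ovoid_def by simp

lemma proj_pt_in_ovoid_iff:
  "vec.subspace S \<Longrightarrow> proj_pt v \<in> ovoid S \<longleftrightarrow> v \<noteq> 0 \<and> Qform v = 0 \<and> v \<in> S"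
  unfolding ovoid_def using proj_pt_in_Q0_iff[of v] proj_pt_subset_iff[of S v] by simp

lemma in_ovoidE:
  assumes "vec.subspace S" "p \<in> ovoid S"
  obtains v where "v \<noteq> 0" "Qform v = 0" "v \<in> S" "p = proj_pt v"
proof -
  from assms(2) have "p \<in> Q0" "p \<subseteq> S" unfolding ovoid_def by auto
  obtain v where "v \<noteq> 0" "Qform v = 0" "p = proj_pt v" by (rule Q0E[OF \<open>p \<in> Q0\<close>])
  moreover from this have "v \<in> S" using proj_pt_subset_iff[OF assms(1)] \<open>p \<subseteq> S\<close> by simp
  ultimately show ?thesis using that by blast
qed

definition polar_perp :: "('a::field ^ 5) set \<Rightarrow> 'a ^ 5 \<Rightarrow> ('a ^ 5) set" where
  "polar_perp S v = {y \<in> S. polar v y = 0}"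

lemma subspace_polar_perp: "vec.subspace S \<Longrightarrow> vec.subspace (polar_perp S v)"
  unfolding polar_perp_def vec.subspace_def
  by (auto simp: polar_add_right polar_scale_right polar_zero_right)

context char_2
begin

text \<open>If \<open>w\<close> were not orthogonal to \<open>y\<close>, the line through \<open>w\<close> and \<open>y\<close> would carry a second
  singular point \<open>s w + y\<close>.\<close>
lemma polar_eq_zero_if_unique_singular_point:
  fixes T :: "('a ^ 5) set"
  assumes T: "vec.subspace T" and w: "w \<in> T" "w \<noteq> 0" "Qform w = 0"
    and unique: "\<And>z. z \<in> T \<Longrightarrow> z \<noteq> 0 \<Longrightarrow> Qform z = 0 \<Longrightarrow> \<exists>k. z = k *s w"
    and y: "y \<in> T"
  shows "polar w y = 0"
proof (rule ccontr)
  assume nz: "polar w y \<noteq> 0"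
  define s where "s = Qform y / polar w y"
  define z where "z = s *s w + y"
  have "z \<in> T" unfolding z_def using T w y vec.subspace_add vec.subspace_scale by blast
  have "Qform z = s^2 * Qform w + Qform y + s * polar w y"
    unfolding z_def by (simp add: Qform_add Qform_scale polar_scale_left)
  also have "\<dots> = Qform y + Qform y" using w nz by (simp add: s_def)
  finally have "Qform z = 0" by (simp add: add_self_eq_zero)
  have "z \<noteq> 0"
  proof
    assume "z = 0"
    then have "y = (- s) *s w" unfolding z_def by (simp add: eq_neg_iff_add_eq_0 add.commute)
    then show False using nz by (simp add: polar_minus_right polar_scale_right polar_self)
  qed
  then obtain k where "z = k *s w" using unique \<open>z \<in> T\<close> \<open>Qform z = 0\<close> by blast
  then have "y = k *s w - s *s w" unfolding z_def by (simp add: algebra_simps)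
  then show False using nz by (simp add: polar_diff_right polar_scale_right polar_self)
qed

lemma tangent_ovoids_common_point:
  fixes S S' :: "('a ^ 5) set"
  assumes S: "vec.subspace S" "vec.subspace S'" and I: "ovoid S \<inter> ovoid S' = {proj_pt v}"
    and "v \<noteq> 0"
  shows "v \<in> S" "v \<in> S'" "Qform v = 0" "\<forall>y \<in> S \<inter> S'. polar v y = 0"
proof -
  have "proj_pt v \<in> ovoid S" "proj_pt v \<in> ovoid S'" using I by auto
  then show v: "v \<in> S" "v \<in> S'" "Qform v = 0"
    using proj_pt_in_ovoid_iff[OF S(1)] proj_pt_in_ovoid_iff[OF S(2)] by simp_all
  show "\<forall>y \<in> S \<inter> S'. polar v y = 0"
  proof
    fix y assume y: "y \<in> S \<inter> S'"
    show "polar v y = 0"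
    proof (rule polar_eq_zero_if_unique_singular_point[OF vec.subspace_inter[OF S] _ \<open>v \<noteq> 0\<close> v(3) _ y])
      show "v \<in> S \<inter> S'" using v by simp
      fix z assume z: "z \<in> S \<inter> S'" "z \<noteq> 0" "Qform z = 0"
      then have "proj_pt z \<in> ovoid S \<inter> ovoid S'"
        using proj_pt_in_ovoid_iff[OF S(1)] proj_pt_in_ovoid_iff[OF S(2)] by simp
      then have "proj_pt v = proj_pt z" using I by auto
      then show "\<exists>k. z = k *s v" using proj_pt_eq_iff \<open>v \<noteq> 0\<close> z(2) by blast
    qed
  qed
qed

lemma tangent_ovoidsE:
  fixes S S' :: "('a ^ 5) set"
  assumes "elliptic_solid S" "elliptic_solid S'" "card (ovoid S \<inter> ovoid S') = 1"
  obtains w where "w \<noteq> 0" "ovoid S \<inter> ovoid S' = {proj_pt w}" "w \<in> S" "w \<in> S'"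
    "Qform w = 0" "\<forall>y \<in> S \<inter> S'. polar w y = 0"
proof -
  have S: "vec.subspace S" "vec.subspace S'" using assms elliptic_solid_subspace by blast+
  obtain p where p: "ovoid S \<inter> ovoid S' = {p}" using assms(3) card_1_singletonE by blast
  then have "p \<in> ovoid S" by blast
  then obtain w where w: "w \<noteq> 0" "p = proj_pt w" using in_ovoidE[OF S(1)] by metis
  with p have I: "ovoid S \<inter> ovoid S' = {proj_pt w}" by simp
  from w(1) I tangent_ovoids_common_point[OF S I w(1)] show ?thesis by (rule that)
qed

lemma tangent_solids_Int_eq_polar_perp:
  fixes S S' :: "('a ^ 5) set"
  assumes E: "elliptic_solid S" "elliptic_solid S'" and "ovoid S \<noteq> ovoid S'"
    and I: "ovoid S \<inter> ovoid S' = {proj_pt v}" and "v \<noteq> 0"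
  shows "S \<inter> S' = polar_perp S v" "vec.dim (polar_perp S v) = 3"
proof -
  have S: "vec.subspace S" "vec.subspace S'" using E elliptic_solid_subspace by blast+
  note tangent = tangent_ovoids_common_point[OF S I \<open>v \<noteq> 0\<close>]
  have "vec.dim (S \<inter> S') = 3"
    using dim_Int_hyperplanes[OF S] E elliptic_solid_dim \<open>ovoid S \<noteq> ovoid S'\<close> by fastforce
  have sub: "S \<inter> S' \<subseteq> polar_perp S v" using tangent unfolding polar_perp_def by auto
  have "polar_perp S v \<noteq> S"
  proof
    assume "polar_perp S v = S"
    then have "\<forall>z\<in>S. polar v z = 0" unfolding polar_perp_def by auto
    then show False using elliptic_solid_nondegenerate[OF E(1)] tangent(1) \<open>v \<noteq> 0\<close> by blast
  qed
  then have "polar_perp S v \<subset> S" unfolding polar_perp_def by auto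
  then have "vec.dim (polar_perp S v) < 4"
    using dim_strict_mono[OF subspace_polar_perp[OF S(1)] S(1)] elliptic_solid_dim[OF E(1)] by simp
  then show "S \<inter> S' = polar_perp S v"
    using vec.subspace_dim_equal[OF vec.subspace_inter[OF S] subspace_polar_perp[OF S(1)] sub]
      \<open>vec.dim (S \<inter> S') = 3\<close> by simp
  with \<open>vec.dim (S \<inter> S') = 3\<close> show "vec.dim (polar_perp S v) = 3" by simp
qed

text \<open>\<open>span {w1, w2}\<close> is a complement of \<open>L\<close> in \<open>S\<close>, and the \<open>L\<close>-component of \<open>w3\<close> is
  orthogonal to all of \<open>S\<close>.\<close>
lemma elliptic_solid_orthogonal_in_span_pair:
  fixes S L :: "('a ^ 5) set"
  assumes E: "elliptic_solid S" and L: "vec.subspace L" "L \<subseteq> S" "2 \<le> vec.dim L"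
    and w: "w1 \<in> S" "w2 \<in> S" "w3 \<in> S" "polar w1 w2 \<noteq> 0"
    and perp: "\<forall>y\<in>L. polar w1 y = 0" "\<forall>y\<in>L. polar w2 y = 0" "\<forall>y\<in>L. polar w3 y = 0"
  shows "w3 \<in> vec.span {w1, w2}"
proof -
  define M where "M = vec.span {w1, w2}"
  have S: "vec.subspace S" "vec.dim S = 4"
    using E elliptic_solid_subspace elliptic_solid_dim by blast+
  have M: "vec.subspace M" "M \<subseteq> S"
    unfolding M_def using w S(1) by (simp_all add: vec.span_minimal)
  have "w2 \<noteq> 0" using w(4) by (auto simp: polar_def)
  moreover have "w1 \<notin> vec.span {w2}"
    using w(4) by (auto simp: vec.span_singleton polar_scale_left polar_self)
  ultimately have "vec.dim M = 2" unfolding M_def by (rule dim_span_pair)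
  have "M \<inter> L \<subseteq> {0}"
  proof
    fix u assume u: "u \<in> M \<inter> L"
    then obtain a b where ab: "u = a *s w1 + b *s w2" unfolding M_def span_pair_eq by auto
    have "polar w1 u = b * polar w1 w2"
      unfolding ab by (simp add: polar_add_right polar_scale_right polar_self)
    then have "b = 0" using perp(1) u w(4) by auto
    have "polar w2 u = a * polar w1 w2"
      unfolding ab by (simp add: polar_add_right polar_scale_right polar_self polar_commute[of w2])
    then have "a = 0" using perp(2) u w(4) by auto
    with \<open>b = 0\<close> show "u \<in> {0}" using ab by simp
  qed
  then have "vec.dim (M \<inter> L) = 0" using vec.dim_eq_0 by blast
  then have "4 \<le> vec.dim (subspace_sum M L)"
    using dim_subspace_sum_Int[OF M(1) L(1)] \<open>vec.dim M = 2\<close> L(3) by linarith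
  then have sum_eq: "subspace_sum M L = S"
    using vec.subspace_dim_equal[OF subspace_subspace_sum[OF M(1) L(1)] S(1)
        subspace_sum_least[OF S(1) M(2) L(2)]] S(2) by simp
  have decomp: "\<exists>a b u. x = a *s w1 + b *s w2 + u \<and> u \<in> L" if x: "x \<in> S" for x
  proof -
    obtain m u where "x = m + u" "m \<in> M" "u \<in> L"
      using x sum_eq unfolding subspace_sum_def by blast
    then show ?thesis unfolding M_def span_pair_eq by blast
  qed
  obtain a b u where w3: "w3 = a *s w1 + b *s w2 + u" and "u \<in> L" using decomp w(3) by blast
  have "u = 0"
  proof (rule elliptic_solid_nondegenerate[OF E])
    show "u \<in> S" using \<open>u \<in> L\<close> L(2) by blast
    show "\<forall>y\<in>S. polar u y = 0"
    proof
      fix y assume "y \<in> S"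
      then obtain a' b' u' where y: "y = a' *s w1 + b' *s w2 + u'" and "u' \<in> L"
        using decomp by blast
      have "polar u w1 = 0" "polar u w2 = 0"
        using perp(1,2) \<open>u \<in> L\<close> polar_commute by metis+
      moreover have "polar w3 u' = a * polar w1 u' + b * polar w2 u' + polar u u'"
        unfolding w3 by (simp add: polar_add_left polar_scale_left)
      then have "polar u u' = 0" using perp \<open>u' \<in> L\<close> by simp
      ultimately show "polar u y = 0"
        unfolding y by (simp add: polar_add_right polar_scale_right)
    qed
  qed
  then show ?thesis unfolding w3 span_pair_eq by auto
qed

lemma tangency_points_not_proportional:
  assumes "ovoid S \<inter> ovoid Si = {proj_pt wi}" "ovoid S \<inter> ovoid Sj = {proj_pt wj}"
    "ovoid Si \<inter> ovoid Sj = {proj_pt v}" "proj_pt v \<notin> ovoid S" "wi \<noteq> 0" "wj \<noteq> (0 :: 'a ^ 5)"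
  shows "wj \<noteq> k *s wi"
proof
  assume "wj = k *s wi"
  then have "proj_pt wi = proj_pt wj" using proj_pt_eq_iff assms(5,6) by blast
  then have "proj_pt wi \<in> ovoid Si \<inter> ovoid Sj" using assms(1,2) by auto
  then have "proj_pt v = proj_pt wi" using assms(3) by auto
  then show False using assms(1,4) by auto
qed

text \<open>Otherwise the three tangency points are distinct, and all are orthogonal to the line in
  which the solid meets the polar plane of the rosette; this puts the third on the secant line
  through the other two, which meets the quadric in those two points only.\<close>
lemma tangent_to_three_rosette_ovoids_contains_base:
  fixes S1 S2 S3 S :: "('a ^ 5) set"
  assumes E: "elliptic_solid S1" "elliptic_solid S2" "elliptic_solid S3" "elliptic_solid S"
    and ne: "ovoid S1 \<noteq> ovoid S2" "ovoid S1 \<noteq> ovoid S3"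
    and I12: "ovoid S1 \<inter> ovoid S2 = {proj_pt v}" and I13: "ovoid S1 \<inter> ovoid S3 = {proj_pt v}"
    and I23: "ovoid S2 \<inter> ovoid S3 = {proj_pt v}" and "v \<noteq> 0"
    and tangent: "card (ovoid S \<inter> ovoid S1) = 1" "card (ovoid S \<inter> ovoid S2) = 1"
      "card (ovoid S \<inter> ovoid S3) = 1"
  shows "proj_pt v \<in> ovoid S"
proof (rule ccontr)
  assume nv: "proj_pt v \<notin> ovoid S"
  define P where "P = polar_perp S1 v"
  have P: "S1 \<inter> S2 = P" "S1 \<inter> S3 = P" "vec.dim P = 3"
    using tangent_solids_Int_eq_polar_perp[OF E(1,2) ne(1) I12 \<open>v \<noteq> 0\<close>]
      tangent_solids_Int_eq_polar_perp[OF E(1,3) ne(2) I13 \<open>v \<noteq> 0\<close>] unfolding P_def by auto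
  have S: "vec.subspace S" "vec.dim S = 4"
    using E(4) elliptic_solid_subspace elliptic_solid_dim by blast+
  have "vec.subspace P"
    unfolding P_def using subspace_polar_perp E(1) elliptic_solid_subspace by blast
  then have L: "vec.subspace (S \<inter> P)" "2 \<le> vec.dim (S \<inter> P)"
    using vec.subspace_inter[OF S(1)] dim_subspace_sum_Int[OF S(1), of P] S(2) P(3)
      dim_le_CARD[of "subspace_sum S P"] by simp_all
  obtain w1 where w1: "w1 \<noteq> 0" "ovoid S \<inter> ovoid S1 = {proj_pt w1}" "w1 \<in> S" "w1 \<in> S1"
    "Qform w1 = 0" "\<forall>y \<in> S \<inter> S1. polar w1 y = 0"
    by (rule tangent_ovoidsE[OF E(4,1) tangent(1)])
  obtain w2 where w2: "w2 \<noteq> 0" "ovoid S \<inter> ovoid S2 = {proj_pt w2}" "w2 \<in> S" "w2 \<in> S2"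
    "Qform w2 = 0" "\<forall>y \<in> S \<inter> S2. polar w2 y = 0"
    by (rule tangent_ovoidsE[OF E(4,2) tangent(2)])
  obtain w3 where w3: "w3 \<noteq> 0" "ovoid S \<inter> ovoid S3 = {proj_pt w3}" "w3 \<in> S" "w3 \<in> S3"
    "Qform w3 = 0" "\<forall>y \<in> S \<inter> S3. polar w3 y = 0"
    by (rule tangent_ovoidsE[OF E(4,3) tangent(3)])
  have "polar w1 w2 \<noteq> 0"
  proof
    assume "polar w1 w2 = 0"
    then obtain k where "w2 = k *s w1"
      using elliptic_solid_singular_orthogonal_proportional[OF E(4) w1(3) w2(3) w1(5) w2(5)] w1(1)
      by blast
    then show False using tangency_points_not_proportional[OF w1(2) w2(2) I12 nv w1(1) w2(1)] by simp
  qed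
  moreover have "\<forall>y\<in>S \<inter> P. polar w1 y = 0" "\<forall>y\<in>S \<inter> P. polar w2 y = 0"
    "\<forall>y\<in>S \<inter> P. polar w3 y = 0"
    using w1(6) w2(6) w3(6) P(1,2) by auto
  ultimately have "w3 \<in> vec.span {w1, w2}"
    using elliptic_solid_orthogonal_in_span_pair[OF E(4) L(1) Int_lower1 L(2) w1(3) w2(3) w3(3)]
    by blast
  then obtain a b where ab: "w3 = a *s w1 + b *s w2" unfolding span_pair_eq by auto
  have "Qform w3 = a * b * polar w1 w2"
    unfolding ab by (simp add: Qform_add Qform_scale polar_scale_left polar_scale_right w1(5) w2(5))
  then have "a = 0 \<or> b = 0" using w3(5) \<open>polar w1 w2 \<noteq> 0\<close> by simp
  moreover have "w3 \<noteq> b *s w2"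
    using tangency_points_not_proportional[OF w2(2) w3(2) I23 nv w2(1) w3(1)] .
  moreover have "w3 \<noteq> a *s w1"
    using tangency_points_not_proportional[OF w1(2) w3(2) I13 nv w1(1) w3(1)] .
  ultimately show False using ab by auto
qed

end

subsection \<open>Cliques through a linear triangle\<close>

definition ovoids_through :: "('a::field ^ 5) set \<Rightarrow> ('a ^ 5) set set set" where
  "ovoids_through P = {ovoid S |S. elliptic_solid S \<and> P \<subseteq> S}"

text \<open>The solids through a plane form a pencil of \<open>q + 1\<close> solids, one of which contains the
  nucleus and so is not elliptic.\<close>
lemma (in char_2) finite_card_ovoids_through:
  fixes P :: "('a ^ 5) set"
  assumes "finite (UNIV :: 'a set)" and P: "vec.subspace P" "vec.dim P = 3" "nucleus \<notin> P"
  shows "finite (ovoids_through P)" "card (ovoids_through P) \<le> CARD('a)"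
proof -
  obtain f :: "'a \<Rightarrow> ('a ^ 5) set" where
    f: "\<And>H. vec.subspace H \<Longrightarrow> vec.dim H + 1 = CARD(5) \<Longrightarrow> P \<subseteq> H \<Longrightarrow> nucleus \<notin> H \<Longrightarrow>
      H \<in> range f"
    using hyperplanes_through_avoiding_in_range[OF P(1) _ P(3)] P(2) by auto
  have "ovoids_through P \<subseteq> range (ovoid \<circ> f)"
  proof
    fix X assume "X \<in> ovoids_through P"
    then obtain S where S: "elliptic_solid S" "P \<subseteq> S" "X = ovoid S"
      unfolding ovoids_through_def by blast
    then have "S \<in> range f"
      using f[OF elliptic_solid_subspace[OF S(1)] _ S(2) nucleus_not_in_elliptic_solid[OF S(1)]]
        elliptic_solid_dim[OF S(1)] by simp
    then show "X \<in> range (ovoid \<circ> f)" using S(3) by auto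
  qed
  moreover have "finite (range (ovoid \<circ> f))" "card (range (ovoid \<circ> f)) \<le> CARD('a)"
    using assms(1) card_image_le by auto
  ultimately show "finite (ovoids_through P)" "card (ovoids_through P) \<le> CARD('a)"
    by (auto intro: finite_subset card_mono order_trans)
qed

lemma (in char_2) tangent_ovoid_in_ovoids_through_polar_perp:
  fixes S1 :: "('a ^ 5) set"
  assumes "elliptic_solid S1" "elliptic_ovoid X" "v \<noteq> 0"
    and "X = ovoid S1 \<or> X \<inter> ovoid S1 = {proj_pt v}"
  shows "X \<in> ovoids_through (polar_perp S1 v)"
proof (cases "X = ovoid S1")
  case True
  then show ?thesis
    using assms(1) unfolding ovoids_through_def polar_perp_def by blast
next
  case False
  obtain SX where SX: "elliptic_solid SX" "X = ovoid SX"
    using assms(2) elliptic_ovoid_iff by blast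
  have "S1 \<inter> SX = polar_perp S1 v"
    using tangent_solids_Int_eq_polar_perp[OF assms(1) SX(1) _ _ assms(3)] False assms(4) SX(2)
    by (auto simp: Int_commute)
  then show ?thesis using SX unfolding ovoids_through_def by blast
qed

lemma (in char_2) linear_clique_if_contains_linear_triangle:
  fixes C D :: "('a ^ 5) set set set"
  assumes fin: "finite (UNIV :: 'a set)" and C: "clique C"
    and D: "D \<subseteq> C" "card D = 3" "linear_clique D"
  shows "linear_clique C"
proof -
  obtain p R where R: "rosette p R" and "D \<subseteq> R" using D(3) unfolding linear_clique_def by blast
  then have "p \<in> Q0" and R_ovoids: "\<forall>X\<in>R. elliptic_ovoid X" and "card R = CARD('a)"
    and R_meet: "\<forall>X\<in>R. \<forall>Y\<in>R. X \<noteq> Y \<longrightarrow> X \<inter> Y = {p}"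
    unfolding rosette_def by auto
  obtain O1 O2 O3 where D_eq: "D = {O1, O2, O3}" and "O1 \<noteq> O2" "O2 \<noteq> O3" "O1 \<noteq> O3"
    using D(2) card_3_iff by metis
  obtain v where "v \<noteq> 0" and p: "p = proj_pt v" using Q0E[OF \<open>p \<in> Q0\<close>] by metis
  have O: "O1 \<in> R" "O2 \<in> R" "O3 \<in> R" using D_eq \<open>D \<subseteq> R\<close> by auto
  obtain S1 S2 S3 where S: "elliptic_solid S1" "O1 = ovoid S1" "elliptic_solid S2" "O2 = ovoid S2"
    "elliptic_solid S3" "O3 = ovoid S3"
    using R_ovoids O elliptic_ovoid_iff by metis
  have I: "ovoid S1 \<inter> ovoid S2 = {proj_pt v}" "ovoid S1 \<inter> ovoid S3 = {proj_pt v}"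
    "ovoid S2 \<inter> ovoid S3 = {proj_pt v}"
    using R_meet O S \<open>O1 \<noteq> O2\<close> \<open>O2 \<noteq> O3\<close> \<open>O1 \<noteq> O3\<close> p by auto
  define P where "P = polar_perp S1 v"
  have P: "vec.subspace P" "vec.dim P = 3" "nucleus \<notin> P"
    using tangent_solids_Int_eq_polar_perp[OF S(1,3) _ I(1) \<open>v \<noteq> 0\<close>] \<open>O1 \<noteq> O2\<close> S
      subspace_polar_perp elliptic_solid_subspace nucleus_not_in_elliptic_solid[OF S(1)]
    unfolding P_def polar_perp_def by auto
  have through_P: "X \<in> ovoids_through P" if "elliptic_ovoid X" "X = O1 \<or> X \<inter> O1 = {p}" for X
    using tangent_ovoid_in_ovoids_through_polar_perp[OF S(1) that(1) \<open>v \<noteq> 0\<close>] that(2) S(2) p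
    unfolding P_def by blast
  have "R \<subseteq> ovoids_through P"
    using through_P R_ovoids R_meet O(1) by blast
  moreover have "C \<subseteq> ovoids_through P"
  proof
    fix X assume "X \<in> C"
    show "X \<in> ovoids_through P"
    proof (cases "X \<in> D")
      case True
      then show ?thesis using \<open>D \<subseteq> R\<close> \<open>R \<subseteq> ovoids_through P\<close> by blast
    next
      case False
      have "elliptic_ovoid X" using C \<open>X \<in> C\<close> unfolding clique_def by blast
      then obtain SX where SX: "elliptic_solid SX" "X = ovoid SX" using elliptic_ovoid_iff by blast
      have tangent: "card (X \<inter> Y) = 1" if "Y \<in> D" for Y
        using C \<open>X \<in> C\<close> that D(1) False unfolding clique_def adjacent_def by (metis subsetD)
      then have "proj_pt v \<in> ovoid SX"
        using tangent_to_three_rosette_ovoids_contains_base[OF S(1,3,5) SX(1) _ _ I \<open>v \<noteq> 0\<close>]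
          \<open>O1 \<noteq> O2\<close> \<open>O1 \<noteq> O3\<close> S SX(2) D_eq by simp
      then have "p \<in> X \<inter> O1" using SX(2) p I(1) S(2) by auto
      moreover obtain y where "X \<inter> O1 = {y}"
        using tangent[of O1] D_eq card_1_singletonE by blast
      ultimately have "X \<inter> O1 = {p}" by auto
      then show ?thesis using through_P \<open>elliptic_ovoid X\<close> by blast
    qed
  qed
  ultimately have sub: "C \<union> R \<subseteq> ovoids_through P" by blast
  note through = finite_card_ovoids_through[OF fin P]
  have "finite (C \<union> R)" using finite_subset[OF sub through(1)] .
  moreover have "card (C \<union> R) \<le> card R"
    using card_mono[OF through(1) sub] through(2) \<open>card R = CARD('a)\<close> by linarith
  ultimately have "C \<subseteq> R" using card_seteq[of "C \<union> R" R] by blast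
  then show ?thesis unfolding linear_clique_def using C R by blast
qed

lemma clique_subset: "clique C \<Longrightarrow> D \<subseteq> C \<Longrightarrow> clique D"
  unfolding clique_def by (meson subsetD)

lemma linear_clique_subset: "linear_clique C \<Longrightarrow> D \<subseteq> C \<Longrightarrow> linear_clique D"
  unfolding linear_clique_def using clique_subset by (meson order_trans)

lemma (in char_2) card_Int_linear_nonlinear_clique_le_2:
  fixes C D :: "('a ^ 5) set set set"
  assumes "finite (UNIV :: 'a set)" "linear_clique C" "clique D" "\<not> linear_clique D"
  shows "card (C \<inter> D) \<le> 2"
proof (rule ccontr)
  assume "\<not> card (C \<inter> D) \<le> 2"
  then have "3 \<le> card (C \<inter> D)" by simp
  then obtain E where E: "E \<subseteq> C \<inter> D" "card E = 3" by (rule obtain_subset_with_card_n)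
  then have "linear_clique E" using linear_clique_subset[OF assms(2)] by simp
  with E have "linear_clique D"
    using linear_clique_if_contains_linear_triangle[OF assms(1,3), of E] by simp
  with assms(4) show False by contradiction
qed

theorem proposition3p2:
  fixes n :: nat
  assumes "finite (UNIV :: 'a::field set)" and "CARD('a) = 2 ^ n"
  shows "(\<forall>C :: ('a ^ 5) set set set. clique C \<and> card C \<ge> 4 \<and>
            (\<exists>D \<subseteq> C. card D = 3 \<and> linear_clique D) \<longrightarrow> linear_clique C)
       \<and> (\<forall>C D :: ('a ^ 5) set set set. linear_clique C \<and> clique D \<and> \<not> linear_clique D
            \<longrightarrow> card (C \<inter> D) \<le> 2)"
proof -
  interpret char_2 "TYPE('a)"
    by unfold_locales (rule two_eq_zero_if_CARD_power_of_two[OF assms])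
  show ?thesis
    using linear_clique_if_contains_linear_triangle[OF assms(1)]
      card_Int_linear_nonlinear_clique_le_2[OF assms(1)] by auto
qed

end
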